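(* For $n\geq 2$ let $k_n$ be the number of ordered pairs of words $(w,z)$ over the alphabet $\{A,B,C,D\}$ satisfying: (i) both $w$ and $z$ start with the letter $A$, and $|w|+|z|=n$; (ii) $w$ and $z$ contain the same number of letters $A$; (iii) neither $w$ nor $z$ contains a $CB$-factor (a letter $C$ immediately followed by a letter $B$); (iv) for all $i$, if the $i$th letter $A$ from the right in $w$ is immediately preceded by a $C$ and immediately followed by a $B$, then the $i$th segment of $z$ from the left contains a letter $B$; (v) for all $i$, if the $i$th letter $A$ from the right in $w$ is immediately preceded by a $C$ and immediately followed by two consecutive letters $B$, then the $i$th segment of $z$ from the left contains at least two letters $B$. Let $K(x)=\sum_{n\geq 2}k_nx^n$. Then \[K(x)=\frac{x^2(1-2x)^2}{1-10x+38x^2-70x^3+66x^4-33x^5+12x^6-6x^7+4x^8-x^9}.\]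
   Context: A segment of a word $v$ over $\{A,B,C,D\}$ is a factor (consecutive letters) that starts with a letter $A$ and ends immediately before the next letter $A$, or at the end of $v$. The $i$th segment from the left is the one starting at the $i$th letter $A$ from the left. The words $w$ and $z$ need not have the same length. *)

theory Defs
  imports "HOL-Computational_Algebra.Formal_Power_Series"
begin

datatype letter = A | B | C | D

definition posA :: "letter list \<Rightarrow> nat list" where
  "posA v = filter (\<lambda>j. v ! j = A) [0..<length v]"

definition numA :: "letter list \<Rightarrow> nat" where
  "numA v = length (posA v)"

text \<open>Position of the (i+1)-th letter A from the right (i is 0-based).\<close>
definition posA_right :: "letter list \<Rightarrow> nat \<Rightarrow> nat" where
  "posA_right v i = posA v ! (numA v - 1 - i)"

text \<open>The (i+1)-th segment from the left (i is 0-based): starts at the (i+1)-th A and ends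
  immediately before the next A, or at the end of the word.\<close>
definition segment :: "letter list \<Rightarrow> nat \<Rightarrow> letter list" where
  "segment v i =
     (let ps = posA v; s = ps ! i;
          e = (if i + 1 < length ps then ps ! (i + 1) else length v)
      in take (e - s) (drop s v))"

definition countB :: "letter list \<Rightarrow> nat" where
  "countB v = length (filter (\<lambda>x. x = B) v)"

definition has_CB :: "letter list \<Rightarrow> bool" where
  "has_CB v \<longleftrightarrow> (\<exists>j. j + 1 < length v \<and> v ! j = C \<and> v ! (j + 1) = B)"

definition good_pair :: "nat \<Rightarrow> letter list \<Rightarrow> letter list \<Rightarrow> bool" where
  "good_pair n w z \<longleftrightarrow>
     w \<noteq> [] \<and> z \<noteq> [] \<and> hd w = A \<and> hd z = A \<and> length w + length z = n \<and>
     numA w = numA z \<and>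
     \<not> has_CB w \<and> \<not> has_CB z \<and>
     (\<forall>i < numA w. let p = posA_right w i in
        (0 < p \<and> w ! (p - 1) = C \<and> p + 1 < length w \<and> w ! (p + 1) = B)
          \<longrightarrow> countB (segment z i) \<ge> 1) \<and>
     (\<forall>i < numA w. let p = posA_right w i in
        (0 < p \<and> w ! (p - 1) = C \<and> p + 2 < length w \<and> w ! (p + 1) = B \<and> w ! (p + 2) = B)
          \<longrightarrow> countB (segment z i) \<ge> 2)"

definition kseq :: "nat \<Rightarrow> nat" where
  "kseq n = card {(w, z). good_pair n w z}"

end

theory Submission
  imports Defs
begin

text \<open>Cut w before its last letter A and z after its first segment: w = w' A v and z = A u z'.
  The i-th A from the right of w is matched with the i-th segment from the left of z, so (w', z')
  is again a good pair (or empty), the cuts create no CB factor, and conditions (iv) and (v) for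
  the last A of w only relate v and u, and only when w' ends with C. Hence good pairs arise by
  repeatedly gluing pairs (v, u) of A-free, CB-free words, which yields a linear system for the
  generating functions of good pairs split by whether w ends with C. Its coefficients are
  generating functions of A-free, CB-free words, rational with denominators 1 - 3x + x^2 and
  1 - 2x, and solving the system gives K(x).\<close>

lemma has_CB_Nil [simp]: "\<not> has_CB []"
  by (simp add: has_CB_def)

lemma has_CB_Cons: "has_CB (x # xs) \<longleftrightarrow> (xs \<noteq> [] \<and> x = C \<and> hd xs = B) \<or> has_CB xs"
proof
  assume "has_CB (x # xs)"
  then obtain j where j: "j + 1 < length (x # xs)" "(x # xs) ! j = C" "(x # xs) ! (j + 1) = B"
    unfolding has_CB_def by blast
  show "(xs \<noteq> [] \<and> x = C \<and> hd xs = B) \<or> has_CB xs"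
  proof (cases j)
    case 0
    then show ?thesis using j by (cases xs) auto
  next
    case (Suc k)
    then show ?thesis using j unfolding has_CB_def by auto
  qed
next
  assume "(xs \<noteq> [] \<and> x = C \<and> hd xs = B) \<or> has_CB xs"
  then show "has_CB (x # xs)"
  proof
    assume "xs \<noteq> [] \<and> x = C \<and> hd xs = B"
    then show ?thesis unfolding has_CB_def by (intro exI[of _ 0]) (cases xs, auto)
  next
    assume "has_CB xs"
    then obtain j where "j + 1 < length xs" "xs ! j = C" "xs ! (j + 1) = B"
      unfolding has_CB_def by blast
    then show ?thesis unfolding has_CB_def by (intro exI[of _ "Suc j"]) auto
  qed
qed

lemma has_CB_append:
  "has_CB (xs @ ys) \<longleftrightarrow>
     has_CB xs \<or> has_CB ys \<or> (xs \<noteq> [] \<and> ys \<noteq> [] \<and> last xs = C \<and> hd ys = B)"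
  by (induction xs) (auto simp: has_CB_Cons)

lemma countB_Nil [simp]: "countB [] = 0"
  by (simp add: countB_def)

lemma countB_Cons [simp]: "countB (x # xs) = (if x = B then 1 else 0) + countB xs"
  by (simp add: countB_def)

lemma countB_append [simp]: "countB (xs @ ys) = countB xs + countB ys"
  by (simp add: countB_def)

lemma posA_Nil [simp]: "posA [] = []"
  by (simp add: posA_def)

lemma set_posA: "set (posA v) = {j. j < length v \<and> v ! j = A}"
  by (auto simp: posA_def)

lemma posA_append: "posA (xs @ ys) = posA xs @ map (\<lambda>j. j + length xs) (posA ys)"
proof -
  have upt: "[0..<length (xs @ ys)] = [0..<length xs] @ map (\<lambda>j. j + length xs) [0..<length ys]"
    by (simp add: map_add_upt add.commute
        upt_add_eq_append[of 0 "length xs" "length ys", simplified])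
  have "filter (\<lambda>j. (xs @ ys) ! j = A) [0..<length xs] = filter (\<lambda>j. xs ! j = A) [0..<length xs]"
    by (rule filter_cong) (auto simp: nth_append)
  moreover have "filter (\<lambda>j. (xs @ ys) ! j = A) (map (\<lambda>j. j + length xs) [0..<length ys])
      = map (\<lambda>j. j + length xs) (filter (\<lambda>j. ys ! j = A) [0..<length ys])"
    by (simp add: filter_map o_def nth_append)
  ultimately show ?thesis unfolding posA_def upt by simp
qed

lemma posA_eq_Nil: "A \<notin> set v \<Longrightarrow> posA v = []"
  unfolding posA_def by (auto simp: filter_empty_conv in_set_conv_nth)

lemma posA_A_Cons: "A \<notin> set v \<Longrightarrow> posA (A # v) = [0]"
  using posA_append[of "[A]" v] by (simp add: posA_eq_Nil posA_def[of "[A]"])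

lemma numA_pos: "v \<noteq> [] \<Longrightarrow> hd v = A \<Longrightarrow> 0 < numA v"
  by (cases v) (auto simp: numA_def posA_def upt_conv_Cons simp del: upt_Suc)

lemma numA_eq_0_iff: "z = [] \<or> hd z = A \<Longrightarrow> numA z = 0 \<longleftrightarrow> z = []"
  using numA_pos[of z] by (auto simp: numA_def)

lemma split_last_A:
  assumes "w \<noteq> []" "hd w = A"
  obtains w' v where "w = w' @ A # v" "A \<notin> set v" "w' = [] \<or> hd w' = A"
proof -
  have "A \<in> set w" using assms by (cases w) auto
  then obtain w' v where "w = w' @ A # v" "A \<notin> set v" using split_list_last by metis
  moreover have "w' = [] \<or> hd w' = A" using assms calculation by (cases w') auto
  ultimately show ?thesis using that by blast
qed

lemma split_first_segment:
  assumes "z \<noteq> []" "hd z = A"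
  obtains u z' where "z = A # u @ z'" "A \<notin> set u" "z' = [] \<or> hd z' = A"
proof -
  obtain t where t: "z = A # t" using assms by (cases z) auto
  show ?thesis
  proof (cases "A \<in> set t")
    case True
    then obtain u r where "t = u @ A # r" "A \<notin> set u" using split_list_first by metis
    then show ?thesis using t that[of u "A # r"] by simp
  next
    case False
    then show ?thesis using t that[of t "[]"] by simp
  qed
qed

lemma append_last_A_inj:
  assumes "w1 @ A # v1 = w2 @ A # v2" "A \<notin> set v1" "A \<notin> set v2"
  shows "w1 = w2 \<and> v1 = v2"
proof -
  have "takeWhile (\<lambda>x. x \<noteq> A) (rev (w @ A # v)) = rev v" if "A \<notin> set v" for w v
    using that by (simp, subst takeWhile_append2) auto
  then have "v1 = v2" using assms by (metis rev_rev_ident)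
  then show ?thesis using assms(1) by simp
qed

lemma first_segment_inj:
  assumes "u1 @ z1 = u2 @ z2" "A \<notin> set u1" "A \<notin> set u2"
    "z1 = [] \<or> hd z1 = A" "z2 = [] \<or> hd z2 = A"
  shows "u1 = u2 \<and> z1 = z2"
proof -
  have "takeWhile (\<lambda>x. x \<noteq> A) (u @ z) = u" if "A \<notin> set u" "z = [] \<or> hd z = A" for u z
    using that by (cases z) (auto, subst takeWhile_append2, auto)
  then have "u1 = u2" using assms by metis
  then show ?thesis using assms(1) by simp
qed

section \<open>Cutting a good pair at the last A of w and the first segment of z\<close>

text \<open>A body is what follows the letter A in a segment of a word without CB factor.\<close>

definition body :: "letter list \<Rightarrow> bool" where
  "body v \<longleftrightarrow> A \<notin> set v \<and> \<not> has_CB v"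

definition ends_C :: "letter list \<Rightarrow> bool" where
  "ends_C v \<longleftrightarrow> v \<noteq> [] \<and> last v = C"

definition compatible :: "letter list \<Rightarrow> letter list \<Rightarrow> bool" where
  "compatible v u \<longleftrightarrow>
     ((\<exists>r. v = B # r) \<longrightarrow> 1 \<le> countB u) \<and> ((\<exists>r. v = B # B # r) \<longrightarrow> 2 \<le> countB u)"

definition segment_condition :: "letter list \<Rightarrow> nat \<Rightarrow> letter list \<Rightarrow> bool" where
  "segment_condition w p s \<longleftrightarrow>
     (0 < p \<and> w ! (p - 1) = C \<and> p + 1 < length w \<and> w ! (p + 1) = B \<longrightarrow> 1 \<le> countB s) \<and>
     (0 < p \<and> w ! (p - 1) = C \<and> p + 2 < length w \<and> w ! (p + 1) = B \<and> w ! (p + 2) = B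
        \<longrightarrow> 2 \<le> countB s)"

lemma good_pair_iff_segment_condition:
  "good_pair n w z \<longleftrightarrow>
     w \<noteq> [] \<and> z \<noteq> [] \<and> hd w = A \<and> hd z = A \<and> length w + length z = n \<and>
     numA w = numA z \<and> \<not> has_CB w \<and> \<not> has_CB z \<and>
     (\<forall>i < numA w. segment_condition w (posA_right w i) (segment z i))"
  unfolding good_pair_def segment_condition_def Let_def by blast

lemma segment_condition_append_A:
  assumes "p < length w" "w ! p = A"
  shows "segment_condition (w @ A # v) p s \<longleftrightarrow> segment_condition w p s"
proof -
  let ?W = "w @ A # v"
  have "0 < p \<Longrightarrow> ?W ! (p - 1) = w ! (p - 1)"
    using assms by (simp add: nth_append less_imp_diff_less)
  moreover have "p + 1 < length ?W \<and> ?W ! (p + 1) = B \<longleftrightarrow> p + 1 < length w \<and> w ! (p + 1) = B"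
    using assms by (cases "p + 1 < length w") (auto simp: nth_append)
  moreover have "p + 2 < length ?W \<and> ?W ! (p + 1) = B \<and> ?W ! (p + 2) = B \<longleftrightarrow>
      p + 2 < length w \<and> w ! (p + 1) = B \<and> w ! (p + 2) = B"
  proof (cases "p + 2 < length w")
    case False
    then consider "p + 2 = length w" | "p + 1 = length w" using assms by linarith
    then show ?thesis by cases (auto simp: nth_append)
  qed (simp add: nth_append)
  ultimately show ?thesis unfolding segment_condition_def by (metis (no_types, lifting))
qed

lemma segment_condition_last_A:
  "segment_condition (w @ A # v) (length w) (A # u) \<longleftrightarrow> (ends_C w \<longrightarrow> compatible v u)"
proof (cases "w = []")
  case True
  then show ?thesis by (simp add: segment_condition_def ends_C_def)
next
  case False
  have last: "(w @ A # v) ! (length w - 1) = last w"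
    using False by (simp add: nth_append last_conv_nth)
  show ?thesis
  proof (cases v)
    case Nil
    then show ?thesis
      using False last by (simp add: segment_condition_def ends_C_def compatible_def)
  next
    case (Cons x v')
    then show ?thesis using False last
      by (cases v') (auto simp: segment_condition_def ends_C_def compatible_def nth_append)
  qed
qed

lemma posA_append_last_A: "A \<notin> set v \<Longrightarrow> posA (w @ A # v) = posA w @ [length w]"
  using posA_append[of w "A # v"] by (simp add: posA_A_Cons)

lemma numA_append_last_A: "A \<notin> set v \<Longrightarrow> numA (w @ A # v) = Suc (numA w)"
  by (simp add: numA_def posA_append_last_A)

lemma posA_right_append_last_A_0: "A \<notin> set v \<Longrightarrow> posA_right (w @ A # v) 0 = length w"
  by (simp add: posA_right_def numA_append_last_A posA_append_last_A) (simp add: numA_def)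

lemma posA_right_append_last_A_Suc:
  assumes "A \<notin> set v" "k < numA w"
  shows "posA_right (w @ A # v) (Suc k) = posA_right w k"
proof -
  have "numA w - Suc k < length (posA w)"
    using assms by (simp add: numA_def)
  then show ?thesis
    using assms by (simp add: posA_right_def numA_append_last_A posA_append_last_A nth_append)
qed

lemma posA_right_is_A:
  assumes "k < numA w"
  shows "posA_right w k < length w" "w ! posA_right w k = A"
proof -
  have "posA_right w k \<in> set (posA w)"
    unfolding posA_right_def using assms by (simp add: numA_def)
  then show "posA_right w k < length w" "w ! posA_right w k = A"
    by (simp_all add: set_posA)
qed

lemma posA_first_segment:
  "A \<notin> set u \<Longrightarrow> posA (A # u @ z) = 0 # map (\<lambda>j. j + Suc (length u)) (posA z)"
  using posA_append[of "A # u" z] by (simp add: posA_A_Cons)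

lemma numA_first_segment: "A \<notin> set u \<Longrightarrow> numA (A # u @ z) = Suc (numA z)"
  by (simp add: numA_def posA_first_segment)

lemma segment_first_segment_0:
  assumes "A \<notin> set u" "z = [] \<or> hd z = A"
  shows "segment (A # u @ z) 0 = A # u"
proof (cases z)
  case Nil
  then show ?thesis using assms by (simp add: segment_def posA_A_Cons)
next
  case (Cons x z')
  then have "posA z = 0 # map Suc (posA z')"
    using assms posA_A_Cons[of "[]"] posA_append[of "[A]" z'] by simp
  then show ?thesis using assms by (simp add: segment_def posA_first_segment Let_def)
qed

lemma segment_first_segment_Suc:
  assumes "A \<notin> set u" "k < numA z"
  shows "segment (A # u @ z) (Suc k) = segment z k"
  using assms by (simp add: segment_def posA_first_segment Let_def numA_def)

lemma has_CB_append_A: "has_CB (w @ A # v) \<longleftrightarrow> has_CB w \<or> has_CB v"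
  by (simp add: has_CB_append has_CB_Cons)

lemma has_CB_first_segment:
  "z = [] \<or> hd z = A \<Longrightarrow> has_CB (A # u @ z) \<longleftrightarrow> has_CB u \<or> has_CB z"
  by (auto simp: has_CB_append has_CB_Cons)

lemma segment_conditions_split:
  assumes v: "A \<notin> set v" and u: "A \<notin> set u" and z: "z = [] \<or> hd z = A"
    and eq: "numA w = numA z"
  shows "(\<forall>i < numA (w @ A # v).
            segment_condition (w @ A # v) (posA_right (w @ A # v) i) (segment (A # u @ z) i)) \<longleftrightarrow>
         (ends_C w \<longrightarrow> compatible v u) \<and>
         (\<forall>i < numA w. segment_condition w (posA_right w i) (segment z i))"
proof -
  let ?W = "w @ A # v" and ?Z = "A # u @ z"
  have "segment_condition ?W (posA_right ?W 0) (segment ?Z 0) \<longleftrightarrow> (ends_C w \<longrightarrow> compatible v u)"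
    using posA_right_append_last_A_0[OF v] segment_first_segment_0[OF u z] segment_condition_last_A
    by simp
  moreover have "segment_condition ?W (posA_right ?W (Suc k)) (segment ?Z (Suc k)) \<longleftrightarrow>
      segment_condition w (posA_right w k) (segment z k)" if k: "k < numA w" for k
    using posA_right_append_last_A_Suc[OF v k] segment_first_segment_Suc[OF u, of k]
      segment_condition_append_A[OF posA_right_is_A[OF k]] k eq
    by simp
  ultimately show ?thesis
    unfolding numA_append_last_A[OF v] All_less_Suc2 by blast
qed

lemma good_pair_or_Nil_iff:
  assumes "w = [] \<or> hd w = A" "z = [] \<or> hd z = A"
  shows "(w = [] \<and> z = []) \<or> good_pair (length w + length z) w z \<longleftrightarrow>
    numA w = numA z \<and> \<not> has_CB w \<and> \<not> has_CB z \<and>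
    (\<forall>i < numA w. segment_condition w (posA_right w i) (segment z i))"
  using assms numA_eq_0_iff[of w] numA_eq_0_iff[of z]
  by (auto simp: good_pair_iff_segment_condition)

lemma good_pair_split:
  assumes v: "A \<notin> set v" and u: "A \<notin> set u"
    and w: "w = [] \<or> hd w = A" and z: "z = [] \<or> hd z = A"
  shows "good_pair n (w @ A # v) (A # u @ z) \<longleftrightarrow>
    n = length w + length z + length v + length u + 2 \<and> body v \<and> body u \<and>
    ((w = [] \<and> z = []) \<or> good_pair (length w + length z) w z) \<and>
    (ends_C w \<longrightarrow> compatible v u)"
proof -
  let ?W = "w @ A # v" and ?Z = "A # u @ z"
  have "hd ?W = A" using w by (cases w) auto
  then have "good_pair n ?W ?Z \<longleftrightarrow>
      n = length w + length z + length v + length u + 2 \<and> numA w = numA z \<and>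
      \<not> has_CB w \<and> \<not> has_CB v \<and> \<not> has_CB u \<and> \<not> has_CB z \<and>
      (\<forall>i < numA ?W. segment_condition ?W (posA_right ?W i) (segment ?Z i))"
    unfolding good_pair_iff_segment_condition numA_append_last_A[OF v] numA_first_segment[OF u]
      has_CB_append_A has_CB_first_segment[OF z]
    by auto
  then show ?thesis
  proof (cases "numA w = numA z")
    case True
    then show ?thesis
      using \<open>good_pair n ?W ?Z \<longleftrightarrow> _\<close> v u segment_conditions_split[OF v u z True]
        good_pair_or_Nil_iff[OF w z]
      by (auto simp: body_def)
  qed (use good_pair_or_Nil_iff[OF w z] in auto)
qed

section \<open>Gluing and the recurrence for good pairs\<close>

lemma finite_words_length_le: "finite {xs :: letter list. length xs \<le> n}"
proof -
  have "(UNIV :: letter set) = {A, B, C, D}"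
    by (auto intro: letter.exhaust)
  then have "finite (UNIV :: letter set)"
    by (metis finite.emptyI finite_insert)
  from finite_lists_length_le[OF this, of n] show ?thesis by simp
qed

lemma finite_word_pairs_length_le:
  "finite {(w :: letter list, z :: letter list). length w + length z \<le> n}"
  by (rule finite_subset[of _ "{xs. length xs \<le> n} \<times> {xs. length xs \<le> n}"])
    (auto simp: finite_words_length_le)

text \<open>The empty pair is admitted in size 0 as the base of the recursion.\<close>

definition good_or_empty_pair :: "nat \<Rightarrow> letter list \<Rightarrow> letter list \<Rightarrow> bool" where
  "good_or_empty_pair n w z \<longleftrightarrow> (n = 0 \<and> w = [] \<and> z = []) \<or> good_pair n w z"

definition good_pairs :: "nat \<Rightarrow> bool \<Rightarrow> (letter list \<times> letter list) set" where
  "good_pairs n e = {(w, z). good_or_empty_pair n w z \<and> ends_C w = e}"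

definition good_pairs_count :: "nat \<Rightarrow> bool \<Rightarrow> nat" where
  "good_pairs_count n e = card (good_pairs n e)"

text \<open>The pairs (v, u) that can be glued onto a pair (w, z) whose first word ends with C iff e',
  producing a pair of size larger by m whose first word ends with C iff e.\<close>

definition body_pairs :: "bool \<Rightarrow> bool \<Rightarrow> nat \<Rightarrow> (letter list \<times> letter list) set" where
  "body_pairs e' e m =
     {(v, u). length v + length u + 2 = m \<and> body v \<and> body u \<and> ends_C v = e \<and> (e' \<longrightarrow> compatible v u)}"

definition glue ::
  "(letter list \<times> letter list) \<times> (letter list \<times> letter list) \<Rightarrow> letter list \<times> letter list"
where
  "glue p = (case p of ((w, z), (v, u)) \<Rightarrow> (w @ A # v, A # u @ z))"

definition glue_domain ::
  "nat \<Rightarrow> bool \<Rightarrow> ((letter list \<times> letter list) \<times> (letter list \<times> letter list)) set" where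
  "glue_domain n e = (\<Union>a < n. \<Union>e' \<in> {True, False}. good_pairs a e' \<times> body_pairs e' e (n - a))"

lemma good_or_empty_pair_length: "good_or_empty_pair n w z \<Longrightarrow> length w + length z = n"
  by (auto simp: good_or_empty_pair_def good_pair_def)

lemma good_or_empty_pair_hd:
  "good_or_empty_pair n w z \<Longrightarrow> (w = [] \<or> hd w = A) \<and> (z = [] \<or> hd z = A)"
  by (auto simp: good_or_empty_pair_def good_pair_def)

lemma finite_good_pairs: "finite (good_pairs n e)"
  by (rule finite_subset[OF _ finite_word_pairs_length_le[of n]])
    (auto simp: good_pairs_def dest: good_or_empty_pair_length)

lemma finite_body_pairs: "finite (body_pairs e' e m)"
  by (rule finite_subset[OF _ finite_word_pairs_length_le[of m]]) (auto simp: body_pairs_def)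

lemma ends_C_append_A: "ends_C (w @ A # v) \<longleftrightarrow> ends_C v"
  by (cases v rule: rev_cases) (auto simp: ends_C_def)

lemma good_pairs_eq_glue_image:
  assumes "1 \<le> n"
  shows "good_pairs n e = glue ` glue_domain n e"
proof
  show "good_pairs n e \<subseteq> glue ` glue_domain n e"
  proof
    fix p assume p: "p \<in> good_pairs n e"
    obtain W Z where WZ: "p = (W, Z)" by (cases p)
    have good: "good_pair n W Z" and e: "ends_C W = e"
      using p assms WZ by (auto simp: good_pairs_def good_or_empty_pair_def)
    then have "W \<noteq> []" "hd W = A" "Z \<noteq> []" "hd Z = A" by (auto simp: good_pair_def)
    then obtain w v u z where W: "W = w @ A # v" "A \<notin> set v" "w = [] \<or> hd w = A"
      and Z: "Z = A # u @ z" "A \<notin> set u" "z = [] \<or> hd z = A"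
      using split_last_A split_first_segment by metis
    let ?a = "length w + length z"
    have split: "n = ?a + length v + length u + 2" "body v" "body u"
      "(w = [] \<and> z = []) \<or> good_pair ?a w z" "ends_C w \<longrightarrow> compatible v u"
      using good_pair_split[OF W(2) Z(2) W(3) Z(3)] good W Z by simp_all
    then have "(w, z) \<in> good_pairs ?a (ends_C w)"
      by (auto simp: good_pairs_def good_or_empty_pair_def)
    moreover have "(v, u) \<in> body_pairs (ends_C w) e (n - ?a)"
      using split e W by (auto simp: body_pairs_def ends_C_append_A)
    moreover have "?a < n" using split by simp
    ultimately have "((w, z), (v, u)) \<in> glue_domain n e"
      unfolding glue_domain_def by (cases "ends_C w") blast+
    moreover have "p = glue ((w, z), (v, u))" using WZ W Z by (simp add: glue_def)
    ultimately show "p \<in> glue ` glue_domain n e" by blast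
  qed
next
  show "glue ` glue_domain n e \<subseteq> good_pairs n e"
  proof
    fix p assume "p \<in> glue ` glue_domain n e"
    then obtain w z v u where dom: "((w, z), (v, u)) \<in> glue_domain n e"
      and p: "p = glue ((w, z), (v, u))" by auto
    from dom obtain a e' where a: "a < n" and wz: "(w, z) \<in> good_pairs a e'"
      and vu: "(v, u) \<in> body_pairs e' e (n - a)"
      unfolding glue_domain_def by blast
    have good: "good_or_empty_pair a w z" and e': "ends_C w = e'"
      using wz by (auto simp: good_pairs_def)
    have "good_pair n (w @ A # v) (A # u @ z)"
      using good_pair_split[of v u w z n] good_or_empty_pair_hd[OF good]
        good_or_empty_pair_length[OF good] good a e' vu
      by (auto simp: body_def body_pairs_def good_or_empty_pair_def)
    then show "p \<in> good_pairs n e"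
      using p vu by (simp add: glue_def good_pairs_def good_or_empty_pair_def
          ends_C_append_A body_pairs_def)
  qed
qed

lemma inj_on_glue: "inj_on glue (glue_domain n e)"
proof
  fix p q assume p: "p \<in> glue_domain n e" and q: "q \<in> glue_domain n e" and eq: "glue p = glue q"
  obtain w1 z1 v1 u1 where P: "p = ((w1, z1), (v1, u1))" by (metis prod.collapse)
  obtain w2 z2 v2 u2 where Q: "q = ((w2, z2), (v2, u2))" by (metis prod.collapse)
  have parts: "A \<notin> set v \<and> A \<notin> set u \<and> (z = [] \<or> hd z = A)"
    if "((w, z), (v, u)) \<in> glue_domain n e" for w z v u
    using that unfolding glue_domain_def
    by (auto simp: body_pairs_def body_def good_pairs_def dest: good_or_empty_pair_hd)
  have "w1 @ A # v1 = w2 @ A # v2" "u1 @ z1 = u2 @ z2"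
    using eq P Q by (auto simp: glue_def)
  then show "p = q"
    using append_last_A_inj first_segment_inj parts[OF p[unfolded P]] parts[OF q[unfolded Q]] P Q
    by metis
qed

lemma card_glue_domain:
  "card (glue_domain n e) =
     (\<Sum>a < n. good_pairs_count a True * card (body_pairs True e (n - a))
              + good_pairs_count a False * card (body_pairs False e (n - a)))"
proof -
  have "card (\<Union>e' \<in> {True, False}. good_pairs a e' \<times> body_pairs e' e (n - a)) =
      good_pairs_count a True * card (body_pairs True e (n - a))
      + good_pairs_count a False * card (body_pairs False e (n - a))" for a
  proof -
    have "(good_pairs a True \<times> body_pairs True e (n - a)) \<inter>
        (good_pairs a False \<times> body_pairs False e (n - a)) = {}"
      by (auto simp: good_pairs_def)
    then show ?thesis
      using finite_good_pairs finite_body_pairs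
      by (simp add: card_Un_disjoint good_pairs_count_def card_cartesian_product)
  qed
  moreover have "card (glue_domain n e) =
      (\<Sum>a < n. card (\<Union>e' \<in> {True, False}. good_pairs a e' \<times> body_pairs e' e (n - a)))"
    unfolding glue_domain_def
  proof (rule card_UN_disjoint)
    show "\<forall>a \<in> {..<n}. finite (\<Union>e' \<in> {True, False}. good_pairs a e' \<times> body_pairs e' e (n - a))"
      using finite_good_pairs finite_body_pairs by auto
    show "\<forall>a \<in> {..<n}. \<forall>b \<in> {..<n}. a \<noteq> b \<longrightarrow>
        (\<Union>e' \<in> {True, False}. good_pairs a e' \<times> body_pairs e' e (n - a)) \<inter>
        (\<Union>e' \<in> {True, False}. good_pairs b e' \<times> body_pairs e' e (n - b)) = {}"
      by (auto simp: good_pairs_def dest: good_or_empty_pair_length)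
  qed simp
  ultimately show ?thesis by simp
qed

lemma good_pairs_count_rec:
  "1 \<le> n \<Longrightarrow> good_pairs_count n e =
     (\<Sum>a < n. good_pairs_count a True * card (body_pairs True e (n - a))
              + good_pairs_count a False * card (body_pairs False e (n - a)))"
  using good_pairs_eq_glue_image card_image[OF inj_on_glue] card_glue_domain
  by (simp add: good_pairs_count_def)

lemma good_pairs_count_0: "good_pairs_count 0 e = (if e then 0 else 1)"
proof -
  have "good_pairs 0 e = (if e then {} else {([], [])})"
    by (auto simp: good_pairs_def good_or_empty_pair_def good_pair_def ends_C_def)
  then show ?thesis by (simp add: good_pairs_count_def)
qed

lemma kseq_eq_good_pairs_count:
  "1 \<le> n \<Longrightarrow> kseq n = good_pairs_count n True + good_pairs_count n False"
proof -
  assume "1 \<le> n"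
  then have "{(w, z). good_pair n w z} = good_pairs n True \<union> good_pairs n False"
    by (auto simp: good_pairs_def good_or_empty_pair_def)
  moreover have "good_pairs n True \<inter> good_pairs n False = {}"
    by (auto simp: good_pairs_def)
  ultimately show ?thesis
    using finite_good_pairs by (simp add: kseq_def good_pairs_count_def card_Un_disjoint)
qed

section \<open>Counting bodies\<close>

definition count_words :: "(letter list \<Rightarrow> bool) \<Rightarrow> nat \<Rightarrow> nat" where
  "count_words P n = card {v. length v = n \<and> P v}"

lemma finite_words_length_eq: "finite {v :: letter list. length v = n \<and> P v}"
  by (rule finite_subset[OF _ finite_words_length_le[of n]]) auto

lemma count_words_0: "count_words P 0 = (if P [] then 1 else 0)"
proof -
  have "{v :: letter list. length v = 0 \<and> P v} = (if P [] then {[]} else {})" by auto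
  then show ?thesis by (simp add: count_words_def)
qed

lemma count_words_False [simp]: "count_words (\<lambda>v. False) n = 0"
  by (simp add: count_words_def)

lemma count_words_cong:
  "(\<And>v. length v = n \<Longrightarrow> P v = Q v) \<Longrightarrow> count_words P n = count_words Q n"
  unfolding count_words_def by (metis (mono_tags, lifting) Collect_cong)

lemma count_words_split:
  "count_words P n = count_words (\<lambda>v. P v \<and> R v) n + count_words (\<lambda>v. P v \<and> \<not> R v) n"
proof -
  have "{v. length v = n \<and> P v} = {v. length v = n \<and> P v \<and> R v} \<union> {v. length v = n \<and> P v \<and> \<not> R v}"
    by auto
  then show ?thesis unfolding count_words_def
    by (simp add: card_Un_disjoint[OF finite_words_length_eq finite_words_length_eq] disjoint_iff)
qed

lemma count_words_Suc:
  "count_words P (Suc n) =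
     count_words (\<lambda>v. P (v @ [A])) n + count_words (\<lambda>v. P (v @ [B])) n +
     count_words (\<lambda>v. P (v @ [C])) n + count_words (\<lambda>v. P (v @ [D])) n"
proof -
  define S where "S x = (\<lambda>v. v @ [x]) ` {v. length v = n \<and> P (v @ [x])}" for x
  have "{v. length v = Suc n \<and> P v} = (\<Union>x \<in> {A, B, C, D}. S x)"
  proof
    show "{v. length v = Suc n \<and> P v} \<subseteq> (\<Union>x \<in> {A, B, C, D}. S x)"
    proof
      fix v assume v: "v \<in> {v. length v = Suc n \<and> P v}"
      then obtain u x where "v = u @ [x]" by (cases v rule: rev_cases) auto
      then show "v \<in> (\<Union>x \<in> {A, B, C, D}. S x)"
        using v by (cases x) (auto simp: S_def)
    qed
  qed (auto simp: S_def)
  moreover have "card (S x) = count_words (\<lambda>v. P (v @ [x])) n" for x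
    unfolding count_words_def S_def by (rule card_image) (simp add: inj_on_def)
  moreover have "card (\<Union>x \<in> {A, B, C, D}. S x) = (\<Sum>x \<in> {A, B, C, D}. card (S x))"
    by (rule card_UN_disjoint) (auto simp: S_def finite_words_length_eq)
  ultimately show ?thesis by (simp add: count_words_def[of P] add.assoc)
qed

lemma card_word_pairs_length_eq:
  "card {(v, u). length v + length u = m \<and> P v \<and> Q u} =
     (\<Sum>i = 0..m. count_words P i * count_words Q (m - i))"
proof -
  have "{(v, u). length v + length u = m \<and> P v \<and> Q u} =
      (\<Union>i \<in> {0..m}. {v. length v = i \<and> P v} \<times> {u. length u = m - i \<and> Q u})"
    by auto
  moreover have "card (\<Union>i \<in> {0..m}. {v. length v = i \<and> P v} \<times> {u. length u = m - i \<and> Q u}) =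
      (\<Sum>i = 0..m. card ({v. length v = i \<and> P v} \<times> {u. length u = m - i \<and> Q u}))"
    by (rule card_UN_disjoint) (auto intro: finite_words_length_eq)
  ultimately show ?thesis by (simp add: card_cartesian_product count_words_def)
qed

lemma body_snoc: "body (v @ [x]) \<longleftrightarrow> body v \<and> x \<noteq> A \<and> \<not> (ends_C v \<and> x = B)"
  by (auto simp: body_def has_CB_append has_CB_Cons ends_C_def)

lemma ends_C_snoc [simp]: "ends_C (v @ [x]) \<longleftrightarrow> x = C"
  by (simp add: ends_C_def)

lemma body_Nil [simp]: "body []"
  by (simp add: body_def)

lemma ends_C_Nil [simp]: "\<not> ends_C []"
  by (simp add: ends_C_def)

lemma body_B_Cons: "body (B # v) \<longleftrightarrow> body v"
  by (simp add: body_def has_CB_Cons)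

lemma ends_C_B_Cons: "ends_C (B # v) \<longleftrightarrow> ends_C v"
  by (cases v) (auto simp: ends_C_def)

definition bodies_count :: "nat \<Rightarrow> nat" where
  "bodies_count = count_words body"

definition bodies_end_count :: "bool \<Rightarrow> nat \<Rightarrow> nat" where
  "bodies_end_count e = count_words (\<lambda>v. body v \<and> ends_C v = e)"

definition bodies_B0_count :: "nat \<Rightarrow> nat" where
  "bodies_B0_count = count_words (\<lambda>v. body v \<and> countB v = 0)"

definition bodies_B0_not_C_count :: "nat \<Rightarrow> nat" where
  "bodies_B0_not_C_count = count_words (\<lambda>v. body v \<and> countB v = 0 \<and> \<not> ends_C v)"

definition bodies_B1_count :: "nat \<Rightarrow> nat" where
  "bodies_B1_count = count_words (\<lambda>v. body v \<and> countB v = 1)"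

definition bodies_B_end_count :: "bool \<Rightarrow> nat \<Rightarrow> nat" where
  "bodies_B_end_count e = count_words (\<lambda>v. body v \<and> ends_C v = e \<and> (\<exists>r. v = B # r))"

definition bodies_BB_end_count :: "bool \<Rightarrow> nat \<Rightarrow> nat" where
  "bodies_BB_end_count e = count_words (\<lambda>v. body v \<and> ends_C v = e \<and> (\<exists>r. v = B # B # r))"

lemma bodies_count_eq: "bodies_count n = bodies_end_count True n + bodies_end_count False n"
  unfolding bodies_count_def bodies_end_count_def using count_words_split[of body n ends_C] by simp

lemma bodies_end_count_True_0: "bodies_end_count True 0 = 0"
  by (simp add: bodies_end_count_def count_words_0)

lemma bodies_end_count_True_Suc: "bodies_end_count True (Suc n) = bodies_count n"
  unfolding bodies_end_count_def bodies_count_def count_words_Suc by (simp add: body_snoc)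

lemma bodies_end_count_False_0: "bodies_end_count False 0 = 1"
  by (simp add: bodies_end_count_def count_words_0)

lemma bodies_end_count_False_Suc:
  "bodies_end_count False (Suc n) = bodies_end_count False n + bodies_count n"
  unfolding bodies_end_count_def bodies_count_def count_words_Suc by (simp add: body_snoc)

lemma bodies_B0_count_0: "bodies_B0_count 0 = 1"
  by (simp add: bodies_B0_count_def count_words_0)

lemma bodies_B0_count_Suc: "bodies_B0_count (Suc n) = 2 * bodies_B0_count n"
  unfolding bodies_B0_count_def count_words_Suc by (simp add: body_snoc)

lemma bodies_B0_not_C_count_0: "bodies_B0_not_C_count 0 = 1"
  by (simp add: bodies_B0_not_C_count_def count_words_0)

lemma bodies_B0_not_C_count_Suc: "bodies_B0_not_C_count (Suc n) = bodies_B0_count n"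
  unfolding bodies_B0_not_C_count_def bodies_B0_count_def count_words_Suc by (simp add: body_snoc)

lemma bodies_B1_count_0: "bodies_B1_count 0 = 0"
  by (simp add: bodies_B1_count_def count_words_0)

lemma bodies_B1_count_Suc:
  "bodies_B1_count (Suc n) = bodies_B0_not_C_count n + 2 * bodies_B1_count n"
proof -
  have "count_words (\<lambda>v. body (v @ [B]) \<and> countB (v @ [B]) = 1) n = bodies_B0_not_C_count n"
    unfolding bodies_B0_not_C_count_def by (rule count_words_cong) (auto simp: body_snoc)
  then show ?thesis unfolding bodies_B1_count_def count_words_Suc by (simp add: body_snoc)
qed

lemma count_words_B_Cons:
  "count_words (\<lambda>v. R v \<and> (\<exists>r. v = B # r)) (Suc n) = count_words (\<lambda>r. R (B # r)) n"
proof -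
  have "{v. length v = Suc n \<and> R v \<and> (\<exists>r. v = B # r)} = Cons B ` {r. length r = n \<and> R (B # r)}"
    by auto
  then show ?thesis unfolding count_words_def by (simp add: card_image)
qed

lemma bodies_B_end_count_0: "bodies_B_end_count e 0 = 0"
  by (simp add: bodies_B_end_count_def count_words_0)

lemma bodies_B_end_count_Suc: "bodies_B_end_count e (Suc n) = bodies_end_count e n"
  unfolding bodies_B_end_count_def bodies_end_count_def
  using count_words_B_Cons[of "\<lambda>v. body v \<and> ends_C v = e" n]
  by (simp add: body_B_Cons ends_C_B_Cons)

lemma bodies_BB_end_count_0: "bodies_BB_end_count e 0 = 0"
  by (simp add: bodies_BB_end_count_def count_words_0)

lemma bodies_BB_end_count_Suc: "bodies_BB_end_count e (Suc n) = bodies_B_end_count e n"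
proof -
  have "bodies_BB_end_count e (Suc n) =
      count_words (\<lambda>v. (body v \<and> ends_C v = e \<and> (\<exists>r. v = B # B # r)) \<and> (\<exists>r. v = B # r)) (Suc n)"
    unfolding bodies_BB_end_count_def by (rule count_words_cong) auto
  also have "\<dots> = count_words (\<lambda>r. body (B # r) \<and> ends_C (B # r) = e \<and> (\<exists>r'. B # r = B # B # r')) n"
    by (rule count_words_B_Cons)
  also have "\<dots> = bodies_B_end_count e n"
    unfolding bodies_B_end_count_def
    by (rule count_words_cong) (simp add: body_B_Cons ends_C_B_Cons)
  finally show ?thesis .
qed

lemma body_pairs_small: "m < 2 \<Longrightarrow> body_pairs e' e m = {}"
  by (auto simp: body_pairs_def)

lemma card_body_pairs_False:
  "card (body_pairs False e (m + 2)) = (\<Sum>i = 0..m. bodies_end_count e i * bodies_count (m - i))"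
proof -
  have "body_pairs False e (m + 2) =
      {(v, u). length v + length u = m \<and> (body v \<and> ends_C v = e) \<and> body u}"
    by (auto simp: body_pairs_def)
  then show ?thesis
    using card_word_pairs_length_eq[of m "\<lambda>v. body v \<and> ends_C v = e" body]
    by (simp add: bodies_end_count_def bodies_count_def)
qed

lemma card_body_pairs_True:
  "card (body_pairs True e (m + 2)) +
     (\<Sum>i = 0..m. bodies_B_end_count e i * bodies_B0_count (m - i)) +
     (\<Sum>i = 0..m. bodies_BB_end_count e i * bodies_B1_count (m - i)) =
   card (body_pairs False e (m + 2))"
proof -
  define V1 where "V1 = {(v, u). length v + length u = m \<and>
    (body v \<and> ends_C v = e \<and> (\<exists>r. v = B # r)) \<and> (body u \<and> countB u = 0)}"
  define V2 where "V2 = {(v, u). length v + length u = m \<and>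
    (body v \<and> ends_C v = e \<and> (\<exists>r. v = B # B # r)) \<and> (body u \<and> countB u = 1)}"
  have "body_pairs False e (m + 2) = (body_pairs True e (m + 2) \<union> V1) \<union> V2"
    by (auto simp: body_pairs_def V1_def V2_def compatible_def)
  moreover have "finite V1" "finite V2"
    by (rule finite_subset[OF _ finite_word_pairs_length_le[of m]], auto simp: V1_def V2_def)+
  moreover have "body_pairs True e (m + 2) \<inter> V1 = {}" "(body_pairs True e (m + 2) \<union> V1) \<inter> V2 = {}"
    by (auto simp: body_pairs_def V1_def V2_def compatible_def)
  ultimately have
    "card (body_pairs False e (m + 2)) = card (body_pairs True e (m + 2)) + card V1 + card V2"
    using finite_body_pairs by (simp add: card_Un_disjoint)
  then show ?thesis
    unfolding V1_def V2_def card_word_pairs_length_eq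
      bodies_B_end_count_def bodies_BB_end_count_def bodies_B0_count_def bodies_B1_count_def
    by simp
qed

section \<open>Generating functions\<close>

definition ogf :: "(nat \<Rightarrow> nat) \<Rightarrow> rat fps" where
  "ogf f = Abs_fps (\<lambda>n. of_nat (f n))"

lemma ogf_nth [simp]: "fps_nth (ogf f) n = of_nat (f n)"
  by (simp add: ogf_def)

abbreviation X :: "rat fps" where
  "X \<equiv> fps_X"

lemma ogf_add: "ogf (\<lambda>n. f n + g n) = ogf f + ogf g"
  by (rule fps_ext) simp

lemma ogf_mult_const: "ogf (\<lambda>n. c * f n) = of_nat c * ogf f"
  by (rule fps_ext) (simp add: fps_of_nat)

lemma ogf_shift: "f 0 = c \<Longrightarrow> (\<And>n. f (Suc n) = g n) \<Longrightarrow> ogf f = of_nat c + X * ogf g"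
  by (rule fps_ext) (case_tac n, simp_all add: fps_of_nat)

lemma solve_bodies_system:
  fixes T WT WF :: "'a :: idom fps"
  assumes "WT = fps_X * T" "WF = 1 + fps_X * (WF + T)" "T = WT + WF"
  shows "T * (1 - 3 * fps_X + fps_X^2) = 1"
    "WT * (1 - 3 * fps_X + fps_X^2) = fps_X"
    "WF * (1 - 3 * fps_X + fps_X^2) = 1 - fps_X"
  using assms by algebra+

lemma solve_B_system:
  fixes Z0 Y Z1 :: "'a :: idom fps"
  assumes "Z0 = 1 + fps_X * (2 * Z0)" "Y = 1 + fps_X * Z0" "Z1 = fps_X * (Y + 2 * Z1)"
  shows "Z0 * (1 - 2 * fps_X) = 1" "Z1 * (1 - 2 * fps_X)^2 = fps_X * (1 - fps_X)"
  using assms by algebra+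

lemma solve_good_pair_system:
  fixes T WT WF Z0 Z1 KT KF :: "'a :: field_char_0 fps"
  defines "H \<equiv> T - fps_X * Z0 - fps_X^2 * Z1"
  assumes "T * (1 - 3 * fps_X + fps_X^2) = 1"
    "WT * (1 - 3 * fps_X + fps_X^2) = fps_X"
    "WF * (1 - 3 * fps_X + fps_X^2) = 1 - fps_X"
    "Z0 * (1 - 2 * fps_X) = 1" "Z1 * (1 - 2 * fps_X)^2 = fps_X * (1 - fps_X)"
    "KT = fps_X^2 * WT * (KT * H + KF * T)" "KF = 1 + fps_X^2 * WF * (KT * H + KF * T)"
  shows "(KT + KF - 1) *
      (1 - 10 * fps_X + 38 * fps_X ^ 2 - 70 * fps_X ^ 3 + 66 * fps_X ^ 4 - 33 * fps_X ^ 5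
        + 12 * fps_X ^ 6 - 6 * fps_X ^ 7 + 4 * fps_X ^ 8 - fps_X ^ 9)
    = fps_X^2 * (1 - 2 * fps_X)^2"
proof -
  define M where "M = KT * H + KF * T"
  have "T = WT + WF"
    using assms(2-4) by algebra
  then have K: "KT + KF - 1 = fps_X^2 * T * M"
    using assms(7,8) unfolding M_def by algebra
  have "M = fps_X^2 * WT * M * H + T + fps_X^2 * WF * M * T"
    using assms(7,8) unfolding M_def by algebra
  then have "fps_X^2 * T * M *
      (1 - 10 * fps_X + 38 * fps_X ^ 2 - 70 * fps_X ^ 3 + 66 * fps_X ^ 4 - 33 * fps_X ^ 5
        + 12 * fps_X ^ 6 - 6 * fps_X ^ 7 + 4 * fps_X ^ 8 - fps_X ^ 9)
    = fps_X^2 * (1 - 2 * fps_X)^2"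
    using assms(2-6) unfolding H_def by algebra
  then show ?thesis
    unfolding K .
qed

lemma ogf_bodies_end_count_True: "ogf (bodies_end_count True) = X * ogf bodies_count"
  by (rule trans[OF ogf_shift[OF bodies_end_count_True_0 bodies_end_count_True_Suc]]) simp

lemma ogf_bodies_closed_forms:
  "ogf bodies_count * (1 - 3 * X + X^2) = 1"
  "ogf (bodies_end_count True) * (1 - 3 * X + X^2) = X"
  "ogf (bodies_end_count False) * (1 - 3 * X + X^2) = 1 - X"
  "ogf bodies_B0_count * (1 - 2 * X) = 1"
  "ogf bodies_B1_count * (1 - 2 * X)^2 = X * (1 - X)"
proof -
  have WF: "ogf (bodies_end_count False) =
      1 + X * (ogf (bodies_end_count False) + ogf bodies_count)"
    by (rule trans[OF ogf_shift[OF bodies_end_count_False_0 bodies_end_count_False_Suc]])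
      (simp add: ogf_add)
  have T: "ogf bodies_count = ogf (bodies_end_count True) + ogf (bodies_end_count False)"
    by (rule fps_ext) (simp add: bodies_count_eq)
  note bodies = solve_bodies_system[OF ogf_bodies_end_count_True WF T]
  show "ogf bodies_count * (1 - 3 * X + X^2) = 1" by (fact bodies(1))
  show "ogf (bodies_end_count True) * (1 - 3 * X + X^2) = X" by (fact bodies(2))
  show "ogf (bodies_end_count False) * (1 - 3 * X + X^2) = 1 - X" by (fact bodies(3))
  have Z0: "ogf bodies_B0_count = 1 + X * (2 * ogf bodies_B0_count)"
    by (rule trans[OF ogf_shift[OF bodies_B0_count_0 bodies_B0_count_Suc]])
      (simp add: ogf_mult_const)
  have Y: "ogf bodies_B0_not_C_count = 1 + X * ogf bodies_B0_count"
    by (rule trans[OF ogf_shift[OF bodies_B0_not_C_count_0 bodies_B0_not_C_count_Suc]]) simp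
  have Z1: "ogf bodies_B1_count = X * (ogf bodies_B0_not_C_count + 2 * ogf bodies_B1_count)"
    by (rule trans[OF ogf_shift[OF bodies_B1_count_0 bodies_B1_count_Suc]])
      (simp add: ogf_add ogf_mult_const)
  note B = solve_B_system[OF Z0 Y Z1]
  show "ogf bodies_B0_count * (1 - 2 * X) = 1" by (fact B(1))
  show "ogf bodies_B1_count * (1 - 2 * X)^2 = X * (1 - X)" by (fact B(2))
qed

lemma ogf_body_pairs_False:
  "ogf (\<lambda>m. card (body_pairs False e m)) = X^2 * ogf (bodies_end_count e) * ogf bodies_count"
  (is "?lhs = ?rhs")
proof (rule fps_ext)
  fix n
  show "fps_nth ?lhs n = fps_nth ?rhs n"
  proof (cases "n < 2")
    case False
    then obtain m where n: "n = m + 2" by (metis add.commute le_Suc_ex not_less)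
    show ?thesis
      using card_body_pairs_False[of e m] unfolding n mult.assoc fps_X_power_mult_nth
      by (simp add: fps_mult_nth)
  qed (simp add: fps_X_power_mult_nth body_pairs_small mult.assoc)
qed

lemma ogf_body_pairs_True:
  "ogf (\<lambda>m. card (body_pairs True e m)) =
     X^2 * ogf (bodies_end_count e) *
       (ogf bodies_count - X * ogf bodies_B0_count - X^2 * ogf bodies_B1_count)"
proof -
  have B: "ogf (bodies_B_end_count e) = X * ogf (bodies_end_count e)"
    by (rule trans[OF ogf_shift[OF bodies_B_end_count_0 bodies_B_end_count_Suc]]) simp
  have BB: "ogf (bodies_BB_end_count e) = X * ogf (bodies_B_end_count e)"
    by (rule trans[OF ogf_shift[OF bodies_BB_end_count_0 bodies_BB_end_count_Suc]]) simp
  have split: "ogf (\<lambda>m. card (body_pairs True e m))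
      + X^2 * (ogf (bodies_B_end_count e) * ogf bodies_B0_count)
      + X^2 * (ogf (bodies_BB_end_count e) * ogf bodies_B1_count)
    = ogf (\<lambda>m. card (body_pairs False e m))" (is "?lhs = ?rhs")
  proof (rule fps_ext)
    fix n
    show "fps_nth ?lhs n = fps_nth ?rhs n"
    proof (cases "n < 2")
      case False
      then obtain m where n: "n = m + 2" by (metis add.commute le_Suc_ex not_less)
      have "(of_nat (card (body_pairs True e (m + 2))) :: rat)
          + of_nat (\<Sum>i = 0..m. bodies_B_end_count e i * bodies_B0_count (m - i))
          + of_nat (\<Sum>i = 0..m. bodies_BB_end_count e i * bodies_B1_count (m - i))
          = of_nat (card (body_pairs False e (m + 2)))"
        using card_body_pairs_True[of e m] by (metis of_nat_add)
      then show ?thesis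
        unfolding n fps_add_nth fps_X_power_mult_nth by (simp add: fps_mult_nth)
    qed (simp add: fps_X_power_mult_nth body_pairs_small)
  qed
  have solve: "p = x^2 * w * (t - x * z0 - x^2 * z1)"
    if "p + x^2 * (s1 * z0) + x^2 * (s2 * z1) = x^2 * w * t" "s1 = x * w" "s2 = x * s1"
    for p x w t z0 z1 s1 s2 :: "rat fps"
    using that by algebra
  show ?thesis
    by (rule solve[OF split[unfolded ogf_body_pairs_False] B BB])
qed

lemma ogf_good_pairs_count:
  "ogf (\<lambda>n. good_pairs_count n e) = (if e then 0 else 1)
     + ogf (\<lambda>n. good_pairs_count n True) * ogf (\<lambda>m. card (body_pairs True e m))
     + ogf (\<lambda>n. good_pairs_count n False) * ogf (\<lambda>m. card (body_pairs False e m))"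
  (is "?lhs = ?rhs")
proof (rule fps_ext)
  fix n
  show "fps_nth ?lhs n = fps_nth ?rhs n"
  proof (cases n)
    case 0
    then show ?thesis by (simp add: good_pairs_count_0 body_pairs_small)
  next
    case (Suc n')
    have "(\<Sum>i = 0..n. f i) = (\<Sum>i < n. f i) + f n" for f :: "nat \<Rightarrow> rat"
      by (simp add: atLeast0AtMost lessThan_Suc_atMost[symmetric])
    then show ?thesis
      using good_pairs_count_rec[of n e] Suc
      by (simp add: fps_mult_nth body_pairs_small sum.distrib)
  qed
qed

lemma kseq_1: "kseq 1 = 0"
proof -
  have "\<not> good_pair 1 w z" for w z
    by (cases w; cases z) (auto simp: good_pair_def)
  then show ?thesis by (simp add: kseq_def)
qed

lemma ogf_kseq:
  "Abs_fps (\<lambda>n. if 2 \<le> n then of_nat (kseq n) else 0) =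
     ogf (\<lambda>n. good_pairs_count n True) + ogf (\<lambda>n. good_pairs_count n False) - 1"
  (is "?lhs = ?rhs")
proof (rule fps_ext)
  fix n :: nat
  consider "n = 0" | "n = 1" | "2 \<le> n" by linarith
  then show "fps_nth ?lhs n = fps_nth ?rhs n"
    by cases (use kseq_eq_good_pairs_count[of n] kseq_1 good_pairs_count_0 in auto)
qed

lemma ogf_good_pairs_count_system:
  defines "M \<equiv> ogf (\<lambda>n. good_pairs_count n True) *
      (ogf bodies_count - X * ogf bodies_B0_count - X^2 * ogf bodies_B1_count)
    + ogf (\<lambda>n. good_pairs_count n False) * ogf bodies_count"
  shows "ogf (\<lambda>n. good_pairs_count n True) = X^2 * ogf (bodies_end_count True) * M"
    "ogf (\<lambda>n. good_pairs_count n False) = 1 + X^2 * ogf (bodies_end_count False) * M"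
proof -
  have factor: "a * (c * h) + b * (c * t) = c * (a * h + b * t)" for a b c h t :: "rat fps"
    by (simp add: algebra_simps)
  note system = ogf_good_pairs_count[unfolded ogf_body_pairs_True ogf_body_pairs_False]
  show "ogf (\<lambda>n. good_pairs_count n True) = X^2 * ogf (bodies_end_count True) * M"
    using system[of True] unfolding M_def if_True add_0_left factor .
  show "ogf (\<lambda>n. good_pairs_count n False) = 1 + X^2 * ogf (bodies_end_count False) * M"
    using system[of False] unfolding M_def if_False add.assoc factor .
qed

theorem theorem4p2:
  shows "Abs_fps (\<lambda>n. if n \<ge> 2 then (of_nat (kseq n) :: rat) else 0) =
     (fps_X ^ 2 * (1 - 2 * fps_X) ^ 2) /
     (1 - 10 * fps_X + 38 * fps_X ^ 2 - 70 * fps_X ^ 3 + 66 * fps_X ^ 4 - 33 * fps_X ^ 5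
        + 12 * fps_X ^ 6 - 6 * fps_X ^ 7 + 4 * fps_X ^ 8 - fps_X ^ 9)"
proof -
  define Den :: "rat fps" where "Den = 1 - 10 * fps_X + 38 * fps_X ^ 2 - 70 * fps_X ^ 3
    + 66 * fps_X ^ 4 - 33 * fps_X ^ 5 + 12 * fps_X ^ 6 - 6 * fps_X ^ 7 + 4 * fps_X ^ 8 - fps_X ^ 9"
  have "Abs_fps (\<lambda>n. if n \<ge> 2 then (of_nat (kseq n) :: rat) else 0) * Den = X^2 * (1 - 2 * X)^2"
    unfolding ogf_kseq Den_def
    by (rule solve_good_pair_system[OF ogf_bodies_closed_forms ogf_good_pairs_count_system])
  moreover have "Den \<noteq> 0"
  proof -
    have "fps_nth Den 0 = 1" by (simp add: Den_def)
    then show ?thesis by auto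
  qed
  ultimately show ?thesis
    unfolding Den_def[symmetric] by (metis nonzero_mult_div_cancel_right)
qed

end
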